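(* Suppose $f\in M^1$ satisfies $\Vert V_\varphi f\Vert_1=1$, and that $\Delta\subset\mathbb{R}^2$ (measurable) and $\varepsilon\ge0$ are such that \[ 1-\varepsilon\le\int_\Delta |V_\varphi f(x,\omega)|\,dx\,d\omega. \] Then \[ 1-\varepsilon\le\inf_{R>0}\left(\frac{\rho(\Delta,R)}{1-e^{-\pi/R^2}}\right)\le|\Delta|. \]
   Context: Let $\varphi(t)=2^{1/4}e^{-\pi t^2}$. The STFT is $V_\varphi f(x,\omega)=\int_{\mathbb{R}} f(t)\overline{\varphi(t-x)}e^{-2\pi i \omega t}\,dt$. The modulation space $M^1$ is $\{f\in\mathcal{S}'(\mathbb{R}): \Vert V_\varphi f\Vert_{1}<\infty\}$, with $\Vert\cdot\Vert_1$ the $L^1(\mathbb{R}^2)$ norm. The planar maximum Nyquist density is $\rho(\Delta,R):=\sup_{z\in\mathbb{R}^2}|\Delta\cap(z+D_{1/R})|$, with $D_{1/R}$ the disc of radius $1/R$ centered at the origin and $|\cdot|$ Lebesgue measure. *)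

theory Defs
  imports "HOL-Analysis.Analysis"
begin

definition gwin :: "real \<Rightarrow> real" where
  "gwin t = 2 powr (1/4) * exp (- pi * t^2)"

definition STFT :: "(real \<Rightarrow> complex) \<Rightarrow> real \<times> real \<Rightarrow> complex" where
  "STFT f z = (LINT t|lborel. f t * cnj (complex_of_real (gwin (t - fst z)))
                 * exp (- 2 * pi * \<i> * complex_of_real (snd z * t)))"

text \<open>Elements of M^1 are (identified with) square-integrable functions whose STFT is in L^1(R^2).\<close>
definition M1 :: "(real \<Rightarrow> complex) set" where
  "M1 = {f. f \<in> borel_measurable lborel \<and> integrable lborel (\<lambda>t. (norm (f t))^2)
            \<and> integrable lebesgue (\<lambda>z. norm (STFT f z))}"

definition L1norm_STFT :: "(real \<Rightarrow> complex) \<Rightarrow> real" where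
  "L1norm_STFT f = (LINT z|lebesgue. norm (STFT f z))"

definition nyquist_rho :: "(real \<times> real) set \<Rightarrow> real \<Rightarrow> real" where
  "nyquist_rho D R = (SUP z. measure lebesgue (D \<inter> ball z (1/R)))"

end

theory Submission
  imports Defs "HOL-Complex_Analysis.Cauchy_Integral_Formula" "HOL-Probability.Distributions"
begin

text \<open>Completing the square in the Gaussian window shows that, up to a Gaussian factor
  \<open>exp (- \<pi> \<bar>w\<bar>\<^sup>2 / 2)\<close> and a unimodular phase, \<open>V f (z\<^sub>0 + w)\<close> is an entire function \<open>G\<close>
  of \<open>conj w\<close> (the Bargmann transform). Averaging \<open>G\<close> over the disc of radius \<open>r\<close> against the
  rotation-invariant weight \<open>exp (- \<pi> \<bar>w\<bar>\<^sup>2 / 2)\<close> returns the total weight times \<open>G 0\<close>, by the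
  mean value property, and that total weight is at least \<open>1 - exp (- \<pi> r\<^sup>2)\<close>. Hence
  \<open>(1 - exp (- \<pi> r\<^sup>2)) \<bar>V f z\<^sub>0\<bar> \<le> \<integral>\<^bsub>B(z\<^sub>0, r)\<^esub> \<bar>V f\<bar>\<close>. Integrating over \<open>\<Delta>\<close> and exchanging
  the integrals, every point is counted with weight \<open>\<bar>\<Delta> \<inter> B(w, r)\<bar> \<le> \<rho>(\<Delta>, 1/r)\<close>, which gives the
  lower bound since \<open>\<parallel>V f\<parallel>\<^sub>1 = 1\<close>. The upper bound holds because \<open>\<rho>(\<Delta>, R) \<le> \<bar>\<Delta>\<bar>\<close> and
  \<open>exp (- \<pi> / R\<^sup>2) \<rightarrow> 0\<close> as \<open>R \<rightarrow> 0\<close>.\<close>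

section \<open>Rotation invariance of Lebesgue measure on the plane\<close>

definition shear :: "real \<Rightarrow> real \<times> real \<Rightarrow> real \<times> real" where
  "shear a p = (fst p + a * snd p, snd p)"

lemma shear_measurable[measurable]: "shear a \<in> borel_measurable borel"
  unfolding shear_def by (intro borel_measurable_continuous_onI continuous_intros)

lemma lborel_distr_shear: "distr lborel borel (shear a) = lborel"
proof (rule measure_eqI)
  fix A :: "(real \<times> real) set"
  assume "A \<in> sets (distr lborel borel (shear a))"
  then have [measurable]: "A \<in> sets borel" "A \<in> sets (lborel \<Otimes>\<^sub>M lborel)"
    unfolding lborel_prod by simp_all
  have "emeasure (distr lborel borel (shear a)) A = emeasure lborel (shear a -` A \<inter> space lborel)"
    by (rule emeasure_distr) auto
  also have "\<dots> = (\<integral>\<^sup>+p. indicator (shear a -` A \<inter> space lborel) p \<partial>lborel)"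
    by (rule nn_integral_indicator[symmetric]) (use measurable_sets[OF shear_measurable] in simp)
  also have "\<dots> = (\<integral>\<^sup>+p. indicator A (fst p + a * snd p, snd p) \<partial>(lborel \<Otimes>\<^sub>M lborel))"
    by (simp add: lborel_prod indicator_def shear_def)
  also have "\<dots> = (\<integral>\<^sup>+y. \<integral>\<^sup>+x. indicator A (x + a * y, y) \<partial>lborel \<partial>lborel)"
    by (subst lborel_pair.nn_integral_snd[symmetric]) auto
  also have "\<dots> = (\<integral>\<^sup>+y. \<integral>\<^sup>+x. indicator A (x, y) \<partial>lborel \<partial>lborel)"
  proof (rule nn_integral_cong)
    fix y :: real
    show "(\<integral>\<^sup>+x. indicator A (x + a * y, y) \<partial>lborel) = (\<integral>\<^sup>+x. indicator A (x, y) \<partial>lborel)"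
      using nn_integral_real_affine[of "\<lambda>x. indicator A (x, y)" 1 "a * y"] by (simp add: add.commute)
  qed
  also have "\<dots> = (\<integral>\<^sup>+p. indicator A p \<partial>(lborel \<Otimes>\<^sub>M lborel))"
    by (subst lborel_pair.nn_integral_snd[symmetric]) auto
  also have "\<dots> = emeasure lborel A"
    by (simp add: lborel_prod)
  finally show "emeasure (distr lborel borel (shear a)) A = emeasure lborel A" .
qed simp

lemma lborel_distr_swap: "distr lborel borel prod.swap = (lborel :: (real \<times> real) measure)"
proof -
  have "distr lborel borel prod.swap = distr lborel lborel (\<lambda>(x::real, y::real). (y, x))"
  proof (rule distr_cong)
    show "sets borel = sets (lborel :: (real \<times> real) measure)" by simp
  qed (simp_all add: prod.swap_def split_beta)
  also have "\<dots> = lborel"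
    by (rule lborel_pair.distr_pair_swap[symmetric, unfolded lborel_prod])
  finally show ?thesis .
qed

definition rotate :: "real \<Rightarrow> real \<times> real \<Rightarrow> real \<times> real" where
  "rotate \<theta> p = (cos \<theta> * fst p + sin \<theta> * snd p, - sin \<theta> * fst p + cos \<theta> * snd p)"

lemma rotate_measurable[measurable]: "rotate \<theta> \<in> borel_measurable borel"
  unfolding rotate_def by (intro borel_measurable_continuous_onI continuous_intros)

text \<open>Away from the half-turn, \<open>\<alpha> = tan (\<theta>/2)\<close> gives the classical factorisation of a rotation
  into three shears.\<close>
lemma rotate_eq_shears:
  assumes "cos \<theta> \<noteq> -1"
  defines "\<alpha> \<equiv> sin \<theta> / (1 + cos \<theta>)"
  shows "rotate \<theta> = shear \<alpha> \<circ> (prod.swap \<circ> shear (- sin \<theta>) \<circ> prod.swap) \<circ> shear \<alpha>"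
proof
  fix p :: "real \<times> real"
  define c s where "c = cos \<theta>" and "s = sin \<theta>"
  have cs: "s * s = (1 - c) * (1 + c)"
    using sin_cos_squared_add[of \<theta>] by (simp add: c_def s_def algebra_simps power2_eq_square)
  have "c \<ge> -1" by (simp add: c_def)
  with assms(1) have pc: "1 + c \<noteq> 0" by (simp add: c_def)
  have \<alpha>s: "\<alpha> * s = 1 - c"
    using pc cs by (simp add: \<alpha>_def c_def s_def field_simps)
  have "\<alpha> * (1 + c) = s" using pc by (simp add: \<alpha>_def c_def s_def)
  moreover have "\<alpha> * (\<alpha> * s) = \<alpha> * (1 - c)" using \<alpha>s by simp
  ultimately have "2 * \<alpha> - \<alpha> * (\<alpha> * s) = s" by (simp add: algebra_simps)
  moreover have "(shear \<alpha> \<circ> (prod.swap \<circ> shear (- s) \<circ> prod.swap) \<circ> shear \<alpha>) p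
      = ((1 - \<alpha> * s) * fst p + (2 * \<alpha> - \<alpha> * (\<alpha> * s)) * snd p, - s * fst p + (1 - \<alpha> * s) * snd p)"
    by (simp add: shear_def algebra_simps)
  ultimately show "rotate \<theta> p = (shear \<alpha> \<circ> (prod.swap \<circ> shear (- sin \<theta>) \<circ> prod.swap) \<circ> shear \<alpha>) p"
    using \<alpha>s by (simp add: rotate_def c_def[symmetric] s_def[symmetric])
qed

lemma lborel_distr_rotate: "distr lborel borel (rotate \<theta>) = lborel"
proof (cases "cos \<theta> = -1")
  case True
  then have "sin \<theta> = 0" using sin_cos_squared_add[of \<theta>] by simp
  then have "rotate \<theta> = (\<lambda>p. 0 + (-1) *\<^sub>R p)" using True by (auto simp: rotate_def)
  then show ?thesis using lborel_affine[of "-1" "0::real \<times> real"] by (simp add: density_1)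
next
  case False
  have [measurable]: "prod.swap \<in> borel_measurable (borel :: (real \<times> real) measure)"
    by (intro borel_measurable_continuous_onI continuous_intros)
  have "distr lborel borel (prod.swap \<circ> shear b \<circ> prod.swap) = lborel" for b
    using distr_distr[of prod.swap borel borel "shear b \<circ> prod.swap" lborel]
      distr_distr[of "shear b" borel borel prod.swap lborel]
    by (simp add: comp_assoc lborel_distr_swap lborel_distr_shear)
  then show ?thesis
    unfolding rotate_eq_shears[OF False]
    using distr_distr[of "shear _" borel borel "(prod.swap \<circ> shear _ \<circ> prod.swap) \<circ> shear _" lborel]
      distr_distr[of "prod.swap \<circ> shear _ \<circ> prod.swap" borel borel "shear _" lborel]
    by (simp add: comp_assoc lborel_distr_shear)
qed

lemma integral_rotate:
  fixes F :: "real \<times> real \<Rightarrow> 'b::{banach, second_countable_topology}"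
  assumes [measurable]: "F \<in> borel_measurable borel"
  shows "(\<integral>w. F (rotate \<theta> w) \<partial>lborel) = (\<integral>w. F w \<partial>lborel)"
  using integral_distr[of "rotate \<theta>" lborel borel F] by (simp add: lborel_distr_rotate)

section \<open>Mean value property for radial weights\<close>

definition conj_of_pair :: "real \<times> real \<Rightarrow> complex" where
  "conj_of_pair w = complex_of_real (fst w) - \<i> * complex_of_real (snd w)"

lemma conj_of_pair_measurable[measurable]: "conj_of_pair \<in> borel_measurable borel"
  unfolding conj_of_pair_def by (intro borel_measurable_continuous_onI continuous_intros)

lemma cis_measurable[measurable]: "cis \<in> borel_measurable borel"
  by (intro borel_measurable_continuous_onI continuous_intros)

lemma norm_conj_of_pair[simp]: "norm (conj_of_pair w) = norm w"
  by (simp add: conj_of_pair_def cmod_def norm_prod_def)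

lemma conj_of_pair_rotate: "conj_of_pair (rotate \<theta> w) = cis \<theta> * conj_of_pair w"
  by (simp add: conj_of_pair_def rotate_def complex_eq_iff algebra_simps)

lemma norm_rotate[simp]: "norm (rotate \<theta> w) = norm w"
  by (metis norm_conj_of_pair conj_of_pair_rotate norm_mult norm_cis mult_1)

lemma holomorphic_mean_value_circle:
  fixes h :: "complex \<Rightarrow> complex"
  assumes "h holomorphic_on UNIV"
  shows "(LINT \<theta>:{0..2*pi}|lborel. h (cis \<theta> * a)) = 2 * pi * h 0"
proof -
  define g where "g = (\<lambda>u. h (a * u))"
  have g: "g holomorphic_on UNIV"
    unfolding g_def by (intro holomorphic_on_compose_gen[OF _ assms, unfolded o_def] holomorphic_intros) auto
  have "((\<lambda>u. g u / (u - 0)) has_contour_integral (2 * of_real pi * \<i> * g 0)) (circlepath 0 1)"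
    by (rule Cauchy_integral_circlepath_simple) (auto intro: holomorphic_on_subset[OF g])
  then have "((\<lambda>t. \<i> * g (cis t)) has_integral (2 * of_real pi * \<i> * g 0)) {0..2*pi}"
    unfolding circlepath_def
    by (subst (asm) has_contour_integral_part_circlepath_iff) (auto simp: cis_neq_zero mult.commute)
  from has_integral_mult_right[OF this, of "-\<i>"]
  have "((\<lambda>t. g (cis t)) has_integral (2 * pi * g 0)) {0..2*pi}"
    by (simp add: algebra_simps)
  moreover have "continuous_on {0..2*pi} (\<lambda>t. g (cis t))"
    by (intro continuous_on_compose2[OF holomorphic_on_imp_continuous_on[OF g]] continuous_intros) auto
  ultimately show ?thesis
    by (simp add: set_borel_integral_eq_integral(2) borel_integrable_atLeastAtMost' integral_unique
        g_def mult.commute)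
qed

lemma integrable_bounded_support:
  fixes \<psi> :: "'a::euclidean_space \<Rightarrow> real"
  assumes [measurable]: "\<psi> \<in> borel_measurable borel"
    and "\<And>w. \<psi> w \<noteq> 0 \<Longrightarrow> norm w \<le> r" and "\<And>w. \<bar>\<psi> w\<bar> \<le> C"
  shows "integrable lborel \<psi>"
proof (rule Bochner_Integration.integrable_bound)
  show "integrable lborel (\<lambda>w::'a. C * indicator (cball 0 r) w :: real)"
    using emeasure_bounded_finite[OF bounded_cball, of "0::'a" r]
    by (intro integrable_mult_right integrable_real_indicator) simp_all
  show "AE w in lborel. norm (\<psi> w) \<le> norm (C * indicator (cball (0::'a) r) w :: real)"
  proof (rule AE_I2)
    fix w :: 'a
    show "norm (\<psi> w) \<le> norm (C * indicator (cball 0 r) w :: real)"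
      using assms(2,3)[of w] by (cases "\<psi> w = 0") (auto simp: indicator_def)
  qed
qed simp

lemma integrable_rotation_average:
  fixes h :: "complex \<Rightarrow> complex" and \<psi> :: "real \<times> real \<Rightarrow> real"
  assumes hc: "continuous_on UNIV h"
    and [measurable]: "\<psi> \<in> borel_measurable borel"
    and \<psi>_supp: "\<And>w. \<psi> w \<noteq> 0 \<Longrightarrow> norm w \<le> r"
    and \<psi>_bound: "\<And>w. \<bar>\<psi> w\<bar> \<le> C"
  shows "integrable (lborel \<Otimes>\<^sub>M lborel)
    (\<lambda>(\<theta>, w). indicator {0..2*pi} \<theta> *\<^sub>R (\<psi> w *\<^sub>R h (cis \<theta> * conj_of_pair w)))"
proof -
  have [measurable]: "h \<in> borel_measurable borel" using hc by (rule borel_measurable_continuous_onI)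
  have "bounded (h ` cball 0 r)"
    by (intro compact_imp_bounded compact_continuous_image continuous_on_subset[OF hc]) auto
  then obtain M where M: "\<And>u. norm u \<le> r \<Longrightarrow> norm (h u) \<le> M"
    unfolding bounded_iff by (metis image_eqI mem_cball_0)
  have "0 \<le> C" using \<psi>_bound[of 0] by (meson abs_ge_zero order_trans)
  show ?thesis
  proof (rule Bochner_Integration.integrable_bound)
    have "emeasure (lborel \<Otimes>\<^sub>M lborel) ({0..2*pi} \<times> cball (0::real \<times> real) r) < \<infinity>"
      using emeasure_bounded_finite[of "cball (0::real \<times> real) r"]
      by (simp add: lborel.emeasure_pair_measure_Times ennreal_mult_less_top)
    then show "integrable (lborel \<Otimes>\<^sub>M lborel)
        (\<lambda>x. indicator ({0..2*pi} \<times> cball (0::real \<times> real) r) x * (C * M))"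
      by (intro integrable_mult_left integrable_real_indicator) auto
    show "AE x in lborel \<Otimes>\<^sub>M lborel.
        norm ((\<lambda>(\<theta>, w). indicator {0..2*pi} \<theta> *\<^sub>R (\<psi> w *\<^sub>R h (cis \<theta> * conj_of_pair w))) x)
        \<le> norm (indicator ({0..2*pi} \<times> cball (0::real \<times> real) r) x * (C * M))"
    proof (rule AE_I2, clarify)
      fix \<theta> :: real and w :: "real \<times> real"
      show "norm (indicator {0..2*pi} \<theta> *\<^sub>R (\<psi> w *\<^sub>R h (cis \<theta> * conj_of_pair w)))
          \<le> norm (indicator ({0..2*pi} \<times> cball 0 r) (\<theta>, w) * (C * M))"
      proof (cases "\<theta> \<in> {0..2*pi} \<and> \<psi> w \<noteq> 0")
        case True
        then have "norm w \<le> r" using \<psi>_supp by auto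
        then have "\<bar>\<psi> w\<bar> * norm (h (cis \<theta> * conj_of_pair w)) \<le> C * M"
          using \<psi>_bound M[of "cis \<theta> * conj_of_pair w"] \<open>0 \<le> C\<close> by (intro mult_mono) (auto simp: norm_mult)
        then show ?thesis using True \<open>norm w \<le> r\<close> by (simp add: dist_norm)
      qed auto
    qed
  qed measurable
qed

text \<open>Integrate over all rotations: each rotation leaves the left-hand side unchanged, while
  for fixed \<open>w\<close> the average over the rotation angle is the circle mean \<open>h 0\<close>.\<close>
lemma holomorphic_mean_value_radial:
  fixes h :: "complex \<Rightarrow> complex" and \<psi> :: "real \<times> real \<Rightarrow> real"
  assumes h: "h holomorphic_on UNIV"
    and \<psi>_rotate: "\<And>\<theta> w. \<psi> (rotate \<theta> w) = \<psi> w"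
    and [measurable]: "\<psi> \<in> borel_measurable borel"
    and \<psi>_supp: "\<And>w. \<psi> w \<noteq> 0 \<Longrightarrow> norm w \<le> r"
    and \<psi>_bound: "\<And>w. \<bar>\<psi> w\<bar> \<le> C"
  shows "(\<integral>w. \<psi> w *\<^sub>R h (conj_of_pair w) \<partial>lborel) = (\<integral>w. \<psi> w \<partial>lborel) *\<^sub>R h 0"
proof -
  have hc: "continuous_on UNIV h" using h by (rule holomorphic_on_imp_continuous_on)
  have [measurable]: "h \<in> borel_measurable borel" using hc by (rule borel_measurable_continuous_onI)
  define J where "J = (\<integral>w. \<psi> w *\<^sub>R h (conj_of_pair w) \<partial>lborel)"
  define \<Phi> where "\<Phi> \<theta> w = indicator {0..2*pi} \<theta> *\<^sub>R (\<psi> w *\<^sub>R h (cis \<theta> * conj_of_pair w))" for \<theta> w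
  have int: "integrable (lborel \<Otimes>\<^sub>M lborel) (case_prod \<Phi>)"
    unfolding \<Phi>_def using integrable_rotation_average[OF hc _ \<psi>_supp \<psi>_bound] by simp
  have "(\<integral>\<theta>. \<Phi> \<theta> w \<partial>lborel) = \<psi> w *\<^sub>R (LINT \<theta>:{0..2*pi}|lborel. h (cis \<theta> * conj_of_pair w))" for w
    unfolding \<Phi>_def set_lebesgue_integral_def integral_scaleR_right[symmetric]
    by (simp only: scaleR_left_commute)
  then have "(\<integral>\<theta>. \<Phi> \<theta> w \<partial>lborel) = \<psi> w *\<^sub>R (2 * pi * h 0)" for w
    by (simp add: holomorphic_mean_value_circle[OF h])
  moreover have "(\<integral>w. \<Phi> \<theta> w \<partial>lborel) = indicator {0..2*pi} \<theta> *\<^sub>R J" for \<theta>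
    using integral_rotate[of "\<lambda>w. \<psi> w *\<^sub>R h (conj_of_pair w)" \<theta>]
    unfolding \<Phi>_def J_def integral_scaleR_right
    by (simp add: \<psi>_rotate conj_of_pair_rotate del: scaleR_scaleR)
  ultimately have "(\<integral>w. \<psi> w *\<^sub>R (2 * pi * h 0) \<partial>lborel) = (2 * pi) *\<^sub>R J"
    using lborel_pair.Fubini_integral[OF int] by simp
  moreover have "integrable lborel \<psi>"
    by (rule integrable_bounded_support[OF _ \<psi>_supp \<psi>_bound]) simp
  ultimately have "(2 * pi) *\<^sub>R J = (2 * pi) *\<^sub>R ((\<integral>w. \<psi> w \<partial>lborel) *\<^sub>R h 0)"
    by (simp add: scaleR_conv_of_real algebra_simps)
  then have "J = (\<integral>w. \<psi> w \<partial>lborel) *\<^sub>R h 0 \<or> 2 * pi = 0"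
    by (simp only: scaleR_cancel_left)
  then show ?thesis
    by (simp add: J_def)
qed

section \<open>Gaussian integrals over discs\<close>

lemma emeasure_ball_real2:
  "r \<ge> 0 \<Longrightarrow> emeasure lborel (ball (c::real \<times> real) r) = ennreal (pi * r^2)"
  using emeasure_ball[of r c] unit_ball_vol_even[of 1] by (simp add: power2_eq_square)

lemma emeasure_cball_real2:
  "r \<ge> 0 \<Longrightarrow> emeasure lborel (cball (c::real \<times> real) r) = ennreal (pi * r^2)"
  using emeasure_cball[of r c] unit_ball_vol_even[of 1] by (simp add: power2_eq_square)

text \<open>Tonelli for the region \<open>{(w, s). norm w \<le> s \<le> r}\<close>: its \<open>s\<close>-sections are discs of area \<open>\<pi> s\<^sup>2\<close>.\<close>
lemma nn_integral_ball_layers: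
  fixes g :: "real \<Rightarrow> real"
  assumes [measurable]: "g \<in> borel_measurable borel" and g: "\<And>s. 0 \<le> s \<Longrightarrow> 0 \<le> g s"
  shows "(\<lambda>w. indicator (ball (0::real \<times> real) r) w * (\<integral>\<^sup>+s. ennreal (g s) * indicator {norm w..r} s \<partial>lborel))
      \<in> borel_measurable lborel"
    and "(\<integral>\<^sup>+w. indicator (ball (0::real \<times> real) r) w * (\<integral>\<^sup>+s. ennreal (g s) * indicator {norm w..r} s \<partial>lborel) \<partial>lborel)
      = (\<integral>\<^sup>+s. ennreal (g s * (pi * s^2)) * indicator {0..r} s \<partial>lborel)"
proof -
  let ?L = "(\<lambda>w. indicator (ball (0::real \<times> real) r) w * (\<integral>\<^sup>+s. ennreal (g s) * indicator {norm w..r} s \<partial>lborel))"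
  define S where "S = {p::(real \<times> real) \<times> real. norm (fst p) < r \<and> norm (fst p) \<le> snd p \<and> snd p \<le> r}"
  have "S = {p. norm (fst p) < r} \<inter> {p. norm (fst p) \<le> snd p} \<inter> {p. snd p \<le> r}"
    by (auto simp: S_def)
  moreover have "open {p::(real \<times> real) \<times> real. norm (fst p) < r}"
    by (intro open_Collect_less continuous_intros)
  moreover have "closed {p::(real \<times> real) \<times> real. norm (fst p) \<le> snd p}" "closed {p::(real \<times> real) \<times> real. snd p \<le> r}"
    by (intro closed_Collect_le continuous_intros)+
  ultimately have "S \<in> sets borel" by auto
  then have [measurable]: "S \<in> sets (lborel \<Otimes>\<^sub>M lborel)" unfolding lborel_prod by simp
  have sections: "?L w = (\<integral>\<^sup>+s. ennreal (g s) * indicator S (w, s) \<partial>lborel)" for w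
    by (cases "w \<in> ball 0 r") (auto intro!: nn_integral_cong simp: S_def indicator_def)
  show "?L \<in> borel_measurable lborel"
    unfolding sections
    by (rule lborel.borel_measurable_nn_integral_fst[of "\<lambda>p. ennreal (g (snd p)) * indicator S p", simplified])
      measurable
  have "(\<integral>\<^sup>+w. ?L w \<partial>lborel) = (\<integral>\<^sup>+w. \<integral>\<^sup>+s. ennreal (g s) * indicator S (w, s) \<partial>lborel \<partial>lborel)"
    by (simp only: sections)
  also have "\<dots> = (\<integral>\<^sup>+s. \<integral>\<^sup>+w. ennreal (g s) * indicator S (w, s) \<partial>lborel \<partial>lborel)"
    by (rule lborel_pair.Fubini') measurable
  also have "\<dots> = (\<integral>\<^sup>+s. ennreal (g s * (pi * s^2)) * indicator {0..r} s \<partial>lborel)"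
  proof (rule nn_integral_cong)
    fix s :: real
    have "ennreal (g s) * indicator S (w, s)
        = (ennreal (g s) * indicator {0..r} s) * indicator (ball 0 r \<inter> cball 0 s) w" for w
      by (auto simp: S_def indicator_def) (use norm_ge_zero[of w] in linarith)
    then have "(\<integral>\<^sup>+w. ennreal (g s) * indicator S (w, s) \<partial>lborel)
        = ennreal (g s) * indicator {0..r} s * emeasure lborel (ball 0 r \<inter> cball (0::real \<times> real) s)"
      by (simp only: nn_integral_cmult_indicator sets_lborel sets.Int borel_open borel_closed
          open_ball closed_cball)
    also have "\<dots> = ennreal (g s * (pi * s^2)) * indicator {0..r} s"
    proof (cases "0 \<le> s \<and> s \<le> r")
      case True
      then have "ball 0 r \<inter> cball (0::real \<times> real) s = (if s = r then ball 0 s else cball 0 s)"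
        by auto
      then show ?thesis
        using True g[of s] by (simp add: emeasure_ball_real2 emeasure_cball_real2 ennreal_mult)
    qed auto
    finally show "(\<integral>\<^sup>+w. ennreal (g s) * indicator S (w, s) \<partial>lborel) = ennreal (g s * (pi * s^2)) * indicator {0..r} s" .
  qed
  finally show "(\<integral>\<^sup>+w. ?L w \<partial>lborel) = (\<integral>\<^sup>+s. ennreal (g s * (pi * s^2)) * indicator {0..r} s \<partial>lborel)" .
qed

lemma exp_minus_mult_le:
  fixes a r :: real
  assumes "a > 0"
  shows "(r^2 + 1 / a) * exp (- a * r^2) \<le> 1 / a"
proof -
  have "1 + a * r^2 \<le> exp (a * r^2)" by (rule exp_ge_add_one_self)
  then have "(1 + a * r^2) * exp (- a * r^2) \<le> 1" by (simp add: exp_minus field_simps)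
  moreover have "(r^2 + 1 / a) * exp (- a * r^2) = (1 + a * r^2) * exp (- a * r^2) / a"
    using assms by (simp add: field_simps)
  ultimately show ?thesis using assms by (simp add: divide_right_mono)
qed

lemma nn_integral_gaussian_derivative:
  fixes a \<rho> r :: real
  assumes "a > 0" "0 \<le> \<rho>" "\<rho> \<le> r"
  shows "(\<integral>\<^sup>+s. ennreal (2 * a * s * exp (- a * s^2)) * indicator {\<rho>..r} s \<partial>lborel)
    = ennreal (exp (- a * \<rho>^2) - exp (- a * r^2))"
proof -
  have "(\<integral>\<^sup>+s. ennreal (2 * a * s * exp (- a * s^2)) * indicator {\<rho>..r} s \<partial>lborel)
      = ennreal (- exp (- a * r^2) - - exp (- a * \<rho>^2))"
  proof (rule nn_integral_FTC_Icc[where F = "\<lambda>s. - exp (- a * s^2)"])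
    fix s assume "s \<in> {\<rho>..r}"
    then show "0 \<le> 2 * a * s * exp (- a * s^2)" using assms by auto
    show "((\<lambda>s. - exp (- a * s^2)) has_real_derivative 2 * a * s * exp (- a * s^2)) (at s)"
      by (auto intro!: derivative_eq_intros simp: algebra_simps)
  qed (use assms in auto)
  then show ?thesis by simp
qed

lemma nn_integral_gaussian_ball:
  fixes a r :: real
  assumes a: "a > 0" and r: "r \<ge> 0"
  shows "(\<integral>\<^sup>+w. indicator (ball (0::real \<times> real) r) w * ennreal (exp (- a * (norm w)^2)) \<partial>lborel)
    = ennreal (pi / a * (1 - exp (- a * r^2)))"
proof -
  define g where "g s = 2 * a * s * exp (- a * s^2)" for s
  have g_meas[measurable]: "g \<in> borel_measurable borel" unfolding g_def by measurable
  have g_nonneg: "0 \<le> s \<Longrightarrow> 0 \<le> g s" for s using a by (simp add: g_def)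
  have layer: "indicator (ball 0 r) w * ennreal (exp (- a * (norm w)^2))
      = indicator (ball 0 r) w * ennreal (exp (- a * r^2))
        + indicator (ball 0 r) w * (\<integral>\<^sup>+s. ennreal (g s) * indicator {norm w..r} s \<partial>lborel)"
    for w :: "real \<times> real"
  proof (cases "norm w < r")
    case True
    moreover have "exp (- a * r^2) \<le> exp (- a * (norm w)^2)"
      using True a by (auto intro!: power_mono)
    ultimately show ?thesis
      using nn_integral_gaussian_derivative[OF a norm_ge_zero, of w r]
      by (simp add: g_def ennreal_plus[symmetric] del: ennreal_plus)
  qed simp
  note layers = nn_integral_ball_layers[where r = r, OF g_meas g_nonneg]
  have "(\<integral>\<^sup>+w. indicator (ball (0::real \<times> real) r) w * ennreal (exp (- a * (norm w)^2)) \<partial>lborel)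
      = (\<integral>\<^sup>+w. indicator (ball (0::real \<times> real) r) w * ennreal (exp (- a * r^2)) \<partial>lborel)
        + (\<integral>\<^sup>+w. indicator (ball (0::real \<times> real) r) w
            * (\<integral>\<^sup>+s. ennreal (g s) * indicator {norm w..r} s \<partial>lborel) \<partial>lborel)"
    unfolding layer
    by (rule nn_integral_add[OF _ layers(1)]) (intro borel_measurable_times_ennreal borel_measurable_indicator; simp)
  also have "\<dots> = ennreal (exp (- a * r^2)) * emeasure lborel (ball (0::real \<times> real) r)
        + (\<integral>\<^sup>+s. ennreal (g s * (pi * s^2)) * indicator {0..r} s \<partial>lborel)"
  proof -
    have "(\<integral>\<^sup>+w. indicator (ball (0::real \<times> real) r) w * ennreal (exp (- a * r^2)) \<partial>lborel)
        = ennreal (exp (- a * r^2)) * emeasure lborel (ball (0::real \<times> real) r)"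
      by (subst mult.commute) (rule nn_integral_cmult_indicator, simp)
    then show ?thesis using layers(2) by simp
  qed
  also have "(\<integral>\<^sup>+s. ennreal (g s * (pi * s^2)) * indicator {0..r} s \<partial>lborel)
      = ennreal (- pi * (r^2 + 1 / a) * exp (- a * r^2) - - pi * (0^2 + 1 / a) * exp (- a * 0^2))"
    by (rule nn_integral_FTC_Icc[where F = "\<lambda>s. - pi * (s^2 + 1 / a) * exp (- a * s^2)"])
      (use a r in \<open>auto intro!: derivative_eq_intros g_nonneg simp: g_def field_simps power2_eq_square\<close>)
  also have "ennreal (exp (- a * r^2)) * emeasure lborel (ball (0::real \<times> real) r) + \<dots>
      = ennreal (pi / a * (1 - exp (- a * r^2)))"
    using r mult_left_mono[OF exp_minus_mult_le[OF a, of r], of pi]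
    by (simp add: emeasure_ball_real2 ennreal_mult[symmetric] ennreal_plus[symmetric]
        field_simps diff_divide_distrib del: ennreal_plus)
  finally show ?thesis .
qed

definition gaussian_disc_weight :: "real \<Rightarrow> real \<times> real \<Rightarrow> real" where
  "gaussian_disc_weight r w = indicator (ball 0 r) w * exp (- pi * (norm w)^2 / 2)"

lemma gaussian_disc_weight_measurable[measurable]: "gaussian_disc_weight r \<in> borel_measurable borel"
  unfolding gaussian_disc_weight_def
  by (intro borel_measurable_times borel_measurable_indicator borel_measurable_continuous_onI
      continuous_intros) auto

lemma gaussian_disc_weight_nonneg: "0 \<le> gaussian_disc_weight r w"
  by (simp add: gaussian_disc_weight_def)

lemma gaussian_disc_weight_le_1: "\<bar>gaussian_disc_weight r w\<bar> \<le> 1"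
  by (simp add: gaussian_disc_weight_def indicator_def)

lemma gaussian_disc_weight_support: "gaussian_disc_weight r w \<noteq> 0 \<Longrightarrow> norm w \<le> r"
  by (auto simp: gaussian_disc_weight_def indicator_def)

lemma gaussian_disc_weight_rotate: "gaussian_disc_weight r (rotate \<theta> w) = gaussian_disc_weight r w"
  by (simp add: gaussian_disc_weight_def indicator_def)

lemma integral_gaussian_disc_weight_ge:
  assumes "r > 0"
  shows "1 - exp (- pi * r^2) \<le> (\<integral>w. gaussian_disc_weight r w \<partial>lborel)"
proof -
  define x where "x = exp (- pi * r^2 / 2)"
  have "(\<integral>\<^sup>+w. ennreal (gaussian_disc_weight r w) \<partial>lborel) = ennreal (2 * (1 - x))"
    using nn_integral_gaussian_ball[of "pi / 2" r] assms
    by (simp add: gaussian_disc_weight_def x_def ennreal_mult' ennreal_indicator mult.commute)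
  then have "(\<integral>w. gaussian_disc_weight r w \<partial>lborel) = 2 * (1 - x)"
    by (subst integral_eq_nn_integral) (auto simp: gaussian_disc_weight_nonneg x_def)
  moreover have "exp (- pi * r^2) = x^2"
    by (simp add: x_def power2_eq_square exp_add[symmetric])
  moreover have "0 \<le> (1 - x)^2" by simp
  ultimately show ?thesis by (simp add: power2_eq_square algebra_simps)
qed

section \<open>The Bargmann factorisation of the STFT\<close>

definition tf_window :: "real \<times> real \<Rightarrow> real \<Rightarrow> complex" where
  "tf_window z t = cnj (complex_of_real (gwin (t - fst z))) * exp (- 2 * pi * \<i> * complex_of_real (snd z * t))"

lemma STFT_eq_tf_window: "STFT f z = (LINT t|lborel. f t * tf_window z t)"
  by (simp add: STFT_def tf_window_def mult.assoc)

lemma norm_tf_window: "norm (tf_window z t) = gwin (t - fst z)"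
  by (simp add: tf_window_def norm_mult norm_exp_eq_Re gwin_def)

lemma tf_window_measurable[measurable]:
  "(\<lambda>p. tf_window (fst p) (snd p)) \<in> borel_measurable (lborel \<Otimes>\<^sub>M lborel)"
  "tf_window z \<in> borel_measurable lborel"
proof -
  have "continuous_on UNIV (\<lambda>p::(real \<times> real) \<times> real. tf_window (fst p) (snd p))"
    "continuous_on UNIV (tf_window z)"
    unfolding tf_window_def gwin_def by (intro continuous_intros)+
  then show "(\<lambda>p. tf_window (fst p) (snd p)) \<in> borel_measurable (lborel \<Otimes>\<^sub>M lborel)"
    "tf_window z \<in> borel_measurable lborel"
    by (auto simp: lborel_prod intro: borel_measurable_continuous_onI)
qed

lemma STFT_measurable[measurable]:
  assumes [measurable]: "f \<in> borel_measurable lborel"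
  shows "STFT f \<in> borel_measurable lborel"
  unfolding STFT_eq_tf_window[abs_def]
  by (rule lborel.borel_measurable_lebesgue_integral[of "\<lambda>z t. f t * tf_window z t", simplified]) measurable

definition bargmann_kernel :: "real \<Rightarrow> real \<Rightarrow> complex \<Rightarrow> complex" where
  "bargmann_kernel x0 t \<zeta> = exp (complex_of_real (2 * pi * (t - x0)) * \<zeta> - complex_of_real pi * \<zeta>^2 / 2)"

definition translation_phase :: "real \<Rightarrow> real \<times> real \<Rightarrow> complex" where
  "translation_phase x0 w = exp (complex_of_real (- pi * (norm w)^2 / 2)
     + \<i> * complex_of_real (- pi * fst w * snd w - 2 * pi * snd w * x0))"

lemma bargmann_kernel_0[simp]: "bargmann_kernel x0 t 0 = 1"
  by (simp add: bargmann_kernel_def)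

lemma bargmann_kernel_holomorphic: "bargmann_kernel x0 t holomorphic_on UNIV"
  unfolding bargmann_kernel_def by (intro holomorphic_intros) auto

lemma bargmann_kernel_measurable[measurable]:
  "(\<lambda>p::(real \<times> real) \<times> real. bargmann_kernel x0 (snd p) (conj_of_pair (fst p))) \<in> borel_measurable (lborel \<Otimes>\<^sub>M lborel)"
proof -
  have "continuous_on UNIV (\<lambda>p::(real \<times> real) \<times> real. bargmann_kernel x0 (snd p) (conj_of_pair (fst p)))"
    unfolding bargmann_kernel_def conj_of_pair_def by (intro continuous_intros) auto
  then show ?thesis by (simp add: lborel_prod borel_measurable_continuous_onI)
qed

lemma norm_translation_phase: "norm (translation_phase x0 w) = exp (- pi * (norm w)^2 / 2)"
  by (simp add: translation_phase_def norm_exp_eq_Re)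

lemma norm_bargmann_kernel_le:
  assumes "norm w \<le> r"
  shows "norm (bargmann_kernel x0 t (conj_of_pair w)) \<le> exp (2 * pi * r * \<bar>t - x0\<bar> + pi * r^2 / 2)"
proof -
  obtain u v where w: "w = (u, v)" by (cases w)
  have uv: "u^2 + v^2 \<le> r^2"
    using assms by (intro sqrt_le_D) (simp add: w norm_Pair)
  have "0 \<le> r" using assms norm_ge_zero order_trans by blast
  moreover have "u^2 \<le> r^2" using uv zero_le_power2[of v] by linarith
  ultimately have u: "\<bar>u\<bar> \<le> r" using abs_le_square_iff[of u r] by simp
  have v: "v^2 \<le> r^2" using uv zero_le_power2[of u] by linarith
  have "(t - x0) * u \<le> \<bar>t - x0\<bar> * r"
  proof -
    have "(t - x0) * u \<le> \<bar>t - x0\<bar> * \<bar>u\<bar>" by (metis abs_ge_self abs_mult)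
    also have "\<dots> \<le> \<bar>t - x0\<bar> * r" using u by (intro mult_left_mono) auto
    finally show ?thesis .
  qed
  then have "(2 * pi) * ((t - x0) * u) \<le> (2 * pi) * (\<bar>t - x0\<bar> * r)"
    by (intro mult_left_mono) auto
  then have h1: "2 * pi * (t - x0) * u \<le> 2 * pi * r * \<bar>t - x0\<bar>" by (simp add: mult_ac)
  have "v^2 - u^2 \<le> r^2" using v zero_le_power2[of u] by linarith
  then have "pi * (v^2 - u^2) \<le> pi * r^2" by (intro mult_left_mono) auto
  then have h2: "- pi * (u^2 - v^2) / 2 \<le> pi * r^2 / 2" by (simp add: algebra_simps)
  have "2 * pi * (t - x0) * u - pi * (u^2 - v^2) / 2 \<le> 2 * pi * r * \<bar>t - x0\<bar> + pi * r^2 / 2"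
    using h1 h2 by linarith
  then show ?thesis
    by (simp add: bargmann_kernel_def conj_of_pair_def w norm_exp_eq_Re power2_eq_square algebra_simps)
qed

text \<open>Completing the square in the Gaussian window: near \<open>z\<^sub>0\<close> the STFT is a Gaussian times
  a unimodular phase times an entire function of the conjugated displacement (the Bargmann transform).\<close>
lemma tf_window_translate:
  "tf_window (x0 + u, \<omega>0 + v) t
     = translation_phase x0 (u, v) * (tf_window (x0, \<omega>0) t * bargmann_kernel x0 t (conj_of_pair (u, v)))"
proof -
  have gwin: "cnj (complex_of_real (gwin s)) = complex_of_real (2 powr (1/4)) * exp (complex_of_real (- pi * s^2))" for s
    unfolding gwin_def complex_cnj_complex_of_real by (simp only: of_real_mult exp_of_real[symmetric])
  define A where "A = complex_of_real (- pi * (t - (x0 + u))^2) + (- 2 * pi * \<i> * complex_of_real ((\<omega>0 + v) * t))"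
  define B where "B = complex_of_real (- pi * (t - x0)^2) + (- 2 * pi * \<i> * complex_of_real (\<omega>0 * t))"
  define C where "C = complex_of_real (2 * pi * (t - x0)) * conj_of_pair (u, v) - complex_of_real pi * (conj_of_pair (u, v))^2 / 2"
  define E where "E = complex_of_real (- pi * (norm (u, v))^2 / 2) + \<i> * complex_of_real (- pi * u * v - 2 * pi * v * x0)"
  have "A = E + (B + C)"
    unfolding A_def B_def C_def E_def conj_of_pair_def
    by (simp add: norm_Pair complex_eq_iff power2_eq_square algebra_simps field_simps)
  have "tf_window (x0 + u, \<omega>0 + v) t = complex_of_real (2 powr (1/4)) * exp A"
    by (simp only: tf_window_def gwin A_def exp_add fst_conv snd_conv) (simp add: mult_ac)
  also have "\<dots> = complex_of_real (2 powr (1/4)) * (exp E * (exp B * exp C))"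
    by (simp add: \<open>A = E + (B + C)\<close> exp_add)
  also have "\<dots> = translation_phase x0 (u, v) * (tf_window (x0, \<omega>0) t * bargmann_kernel x0 t (conj_of_pair (u, v)))"
    by (simp only: tf_window_def gwin B_def C_def E_def translation_phase_def bargmann_kernel_def exp_add
        fst_conv snd_conv) (simp add: mult_ac)
  finally show ?thesis .
qed

section \<open>The local estimate\<close>

lemma integrable_gaussian: "integrable lborel (\<lambda>t::real. exp (- ((t - x0)^2) / 2))"
proof -
  have "integrable lborel (\<lambda>t. sqrt (2 * pi) * normal_density x0 1 t)"
    by (intro integrable_mult_right integrable_normal_density) simp
  then show ?thesis by (simp add: normal_density_def)
qed

text \<open>AM-GM, with the Gaussian absorbing the exponential growth \<open>exp (c \<bar>s\<bar>)\<close>.\<close>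
lemma mult_gaussian_le_AM_GM:
  fixes y s c :: real
  shows "y * exp (- pi * s^2 + c * \<bar>s\<bar>) \<le> (y^2 + exp (c^2 / pi) * exp (- (s^2) / 2)) / 2"
proof -
  define H where "H = exp (- pi * s^2 + c * \<bar>s\<bar>)"
  have "0 \<le> (pi * \<bar>s\<bar> - c)^2" by simp
  then have "2 * c * \<bar>s\<bar> \<le> pi * s^2 + c^2 / pi"
    by (simp add: power2_eq_square field_simps)
  moreover have "s^2 / 2 \<le> pi * s^2"
    using pi_gt3 by (intro order_trans[OF _ mult_right_mono[of 1 pi]]) auto
  ultimately have "H^2 \<le> exp (c^2 / pi + (- (s^2) / 2))"
    by (simp add: H_def power2_eq_square exp_add[symmetric])
  also have "\<dots> = exp (c^2 / pi) * exp (- (s^2) / 2)" by (rule exp_add)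
  finally have H2: "H^2 \<le> exp (c^2 / pi) * exp (- (s^2) / 2)" .
  have "y * H \<le> (y^2 + H^2) / 2"
    using zero_le_power2[of "y - H"] by (simp add: power2_eq_square algebra_simps)
  also have "\<dots> \<le> (y^2 + exp (c^2 / pi) * exp (- (s^2) / 2)) / 2"
    using H2 by (intro divide_right_mono add_left_mono) auto
  finally show ?thesis by (simp add: H_def)
qed

lemma integrable_L2_times_gaussian:
  fixes f :: "real \<Rightarrow> complex"
  assumes [measurable]: "f \<in> borel_measurable lborel" and "integrable lborel (\<lambda>t. (norm (f t))^2)"
  shows "integrable lborel (\<lambda>t. norm (f t) * exp (- pi * (t - x0)^2 + c * \<bar>t - x0\<bar>))"
proof (rule Bochner_Integration.integrable_bound)
  show "integrable lborel (\<lambda>t. ((norm (f t))^2 + exp (c^2 / pi) * exp (- ((t - x0)^2) / 2)) / 2)"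
    using assms(2) integrable_gaussian[of x0] by (intro integrable_divide integrable_add integrable_mult_right) auto
  show "AE t in lborel. norm (norm (f t) * exp (- pi * (t - x0)^2 + c * \<bar>t - x0\<bar>))
      \<le> norm (((norm (f t))^2 + exp (c^2 / pi) * exp (- ((t - x0)^2) / 2)) / 2)"
    using mult_gaussian_le_AM_GM[of "norm (f _)"] by (intro AE_I2) simp
qed measurable

lemma integral_lborel_translate:
  fixes F :: "'a::euclidean_space \<Rightarrow> 'b::{banach, second_countable_topology}"
  assumes [measurable]: "F \<in> borel_measurable borel"
  shows "(\<integral>w. F (z0 + w) \<partial>lborel) = (\<integral>w. F w \<partial>lborel)"
  using integral_distr[of "(+) z0" lborel borel F] by (simp add: lborel_distr_plus)

definition local_bargmann_transform :: "(real \<Rightarrow> complex) \<Rightarrow> real \<times> real \<Rightarrow> complex \<Rightarrow> complex" where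
  "local_bargmann_transform f z0 \<zeta> = (LINT t|lborel. f t * tf_window z0 t * bargmann_kernel (fst z0) t \<zeta>)"

lemma STFT_translate:
  "STFT f (z0 + w) = translation_phase (fst z0) w * local_bargmann_transform f z0 (conj_of_pair w)"
proof -
  obtain x0 \<omega>0 u v where z0: "z0 = (x0, \<omega>0)" and w: "w = (u, v)" by (cases z0, cases w)
  have "STFT f (z0 + w)
      = (LINT t|lborel. translation_phase x0 w * (f t * tf_window z0 t * bargmann_kernel x0 t (conj_of_pair w)))"
    by (simp add: STFT_eq_tf_window z0 w tf_window_translate mult_ac)
  then show ?thesis by (simp add: local_bargmann_transform_def z0)
qed

lemma norm_STFT_translate:
  "norm (STFT f (z0 + w)) = exp (- pi * (norm w)^2 / 2) * norm (local_bargmann_transform f z0 (conj_of_pair w))"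
  by (simp add: STFT_translate norm_mult norm_translation_phase)

lemma norm_bargmann_integrand_le:
  assumes "norm w \<le> r"
  shows "norm (f t * tf_window z0 t * bargmann_kernel (fst z0) t (conj_of_pair w))
    \<le> 2 powr (1/4) * exp (pi * r^2 / 2) * (norm (f t) * exp (- pi * (t - fst z0)^2 + (2 * pi * r) * \<bar>t - fst z0\<bar>))"
proof -
  have "norm (f t * tf_window z0 t * bargmann_kernel (fst z0) t (conj_of_pair w))
      \<le> norm (f t) * gwin (t - fst z0) * exp (2 * pi * r * \<bar>t - fst z0\<bar> + pi * r^2 / 2)"
    using norm_bargmann_kernel_le[OF assms, of "fst z0" t]
    by (simp add: norm_mult norm_tf_window) (intro mult_left_mono; simp add: gwin_def)
  then show ?thesis
    by (simp add: gwin_def exp_add[symmetric] algebra_simps)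
qed

lemma integrable_indicator_cball_times:
  fixes B :: "real \<Rightarrow> real"
  assumes B: "integrable lborel B" and B_nonneg: "\<And>t. 0 \<le> B t"
  shows "integrable (lborel \<Otimes>\<^sub>M lborel) (\<lambda>p. indicator (cball (0::'a::euclidean_space) r) (fst p) * B (snd p))"
proof (rule lborel_pair.Fubini_integrable)
  have "B \<in> borel_measurable lborel" using B by (rule borel_measurable_integrable)
  then have [measurable]: "(\<lambda>p. B (snd p)) \<in> borel_measurable (lborel \<Otimes>\<^sub>M lborel)"
    by (rule measurable_compose[OF measurable_snd])
  have [measurable]: "cball (0::'a) r \<in> sets borel" by simp
  show "(\<lambda>p. indicator (cball (0::'a) r) (fst p) * B (snd p)) \<in> borel_measurable (lborel \<Otimes>\<^sub>M lborel)"
    by measurable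
  have "integrable lborel (\<lambda>w. indicator (cball (0::'a) r) w * (\<integral>t. B t \<partial>lborel))"
    using emeasure_bounded_finite[OF bounded_cball, of "0::'a" r]
    by (intro integrable_mult_left integrable_real_indicator) auto
  then show "integrable lborel (\<lambda>w. \<integral>t. norm (indicator (cball (0::'a) r) (fst (w, t)) * B (snd (w, t))) \<partial>lborel)"
    by (simp add: B_nonneg abs_mult)
  show "AE w in lborel. integrable lborel (\<lambda>t. indicator (cball (0::'a) r) (fst (w, t)) * B (snd (w, t)))"
    using B by (intro AE_I2) simp
qed

lemma integrable_gaussian_disc_weight_bargmann:
  fixes f :: "real \<Rightarrow> complex"
  assumes [measurable]: "f \<in> borel_measurable lborel" and "integrable lborel (\<lambda>t. (norm (f t))^2)"
  shows "integrable (lborel \<Otimes>\<^sub>M lborel) (\<lambda>p. gaussian_disc_weight r (fst p)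
           *\<^sub>R (f (snd p) * tf_window z0 (snd p) * bargmann_kernel (fst z0) (snd p) (conj_of_pair (fst p))))"
proof (rule Bochner_Integration.integrable_bound)
  define B where "B t = 2 powr (1/4) * exp (pi * r^2 / 2)
      * (norm (f t) * exp (- pi * (t - fst z0)^2 + (2 * pi * r) * \<bar>t - fst z0\<bar>))" for t
  have "integrable lborel B"
    unfolding B_def using integrable_L2_times_gaussian[OF assms, of "fst z0" "2 * pi * r"]
    by (intro integrable_mult_right)
  moreover have B_nonneg: "0 \<le> B t" for t by (simp add: B_def)
  ultimately show "integrable (lborel \<Otimes>\<^sub>M lborel) (\<lambda>p. indicator (cball (0::real \<times> real) r) (fst p) * B (snd p))"
    by (rule integrable_indicator_cball_times)
  show "AE p in lborel \<Otimes>\<^sub>M lborel. norm (gaussian_disc_weight r (fst p)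
        *\<^sub>R (f (snd p) * tf_window z0 (snd p) * bargmann_kernel (fst z0) (snd p) (conj_of_pair (fst p))))
      \<le> norm (indicator (cball (0::real \<times> real) r) (fst p) * B (snd p))"
  proof (intro AE_I2)
    fix p :: "(real \<times> real) \<times> real"
    show "norm (gaussian_disc_weight r (fst p)
        *\<^sub>R (f (snd p) * tf_window z0 (snd p) * bargmann_kernel (fst z0) (snd p) (conj_of_pair (fst p))))
      \<le> norm (indicator (cball (0::real \<times> real) r) (fst p) * B (snd p))"
    proof (cases "gaussian_disc_weight r (fst p) = 0")
      case False
      then have "norm (fst p) \<le> r" by (rule gaussian_disc_weight_support)
      then have "\<bar>gaussian_disc_weight r (fst p)\<bar>
          * norm (f (snd p) * tf_window z0 (snd p) * bargmann_kernel (fst z0) (snd p) (conj_of_pair (fst p)))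
          \<le> 1 * B (snd p)"
        using gaussian_disc_weight_le_1 norm_bargmann_integrand_le unfolding B_def by (intro mult_mono) auto
      with \<open>norm (fst p) \<le> r\<close> show ?thesis using B_nonneg by simp
    qed simp
  qed
qed measurable

lemma local_bargmann_transform_disc_mean:
  fixes f :: "real \<Rightarrow> complex"
  assumes "f \<in> borel_measurable lborel" and "integrable lborel (\<lambda>t. (norm (f t))^2)"
  shows "integrable lborel (\<lambda>w. gaussian_disc_weight r w *\<^sub>R local_bargmann_transform f z0 (conj_of_pair w))"
    and "(\<integral>w. gaussian_disc_weight r w *\<^sub>R local_bargmann_transform f z0 (conj_of_pair w) \<partial>lborel)
           = (\<integral>w. gaussian_disc_weight r w \<partial>lborel) *\<^sub>R STFT f z0"
proof -
  define \<Psi> where "\<Psi> w t = gaussian_disc_weight r w *\<^sub>R (f t * tf_window z0 t * bargmann_kernel (fst z0) t (conj_of_pair w))"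
    for w t
  have int: "integrable (lborel \<Otimes>\<^sub>M lborel) (\<lambda>(w, t). \<Psi> w t)"
    using integrable_gaussian_disc_weight_bargmann[OF assms] by (simp add: \<Psi>_def split_beta')
  have inner_t: "(\<integral>t. \<Psi> w t \<partial>lborel) = gaussian_disc_weight r w *\<^sub>R local_bargmann_transform f z0 (conj_of_pair w)" for w
    by (simp add: \<Psi>_def local_bargmann_transform_def)
  have inner_w: "(\<integral>w. \<Psi> w t \<partial>lborel) = (\<integral>w. gaussian_disc_weight r w \<partial>lborel) *\<^sub>R (f t * tf_window z0 t)" for t
  proof -
    have "(\<integral>w. \<Psi> w t \<partial>lborel)
        = f t * tf_window z0 t * (\<integral>w. gaussian_disc_weight r w *\<^sub>R bargmann_kernel (fst z0) t (conj_of_pair w) \<partial>lborel)"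
      unfolding \<Psi>_def mult_scaleR_right[symmetric] by (rule integral_mult_right_zero)
    also have "(\<integral>w. gaussian_disc_weight r w *\<^sub>R bargmann_kernel (fst z0) t (conj_of_pair w) \<partial>lborel)
        = (\<integral>w. gaussian_disc_weight r w \<partial>lborel) *\<^sub>R 1"
      using holomorphic_mean_value_radial[OF bargmann_kernel_holomorphic gaussian_disc_weight_rotate gaussian_disc_weight_measurable
          gaussian_disc_weight_support gaussian_disc_weight_le_1] by simp
    finally show ?thesis by simp
  qed
  show "integrable lborel (\<lambda>w. gaussian_disc_weight r w *\<^sub>R local_bargmann_transform f z0 (conj_of_pair w))"
    using lborel_pair.integrable_fst'[OF int] by (simp add: inner_t)
  have "(\<integral>w. gaussian_disc_weight r w *\<^sub>R local_bargmann_transform f z0 (conj_of_pair w) \<partial>lborel)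
      = (\<integral>t. (\<integral>w. \<Psi> w t \<partial>lborel) \<partial>lborel)"
    using lborel_pair.Fubini_integral[OF int] by (simp add: inner_t)
  then show "(\<integral>w. gaussian_disc_weight r w *\<^sub>R local_bargmann_transform f z0 (conj_of_pair w) \<partial>lborel)
      = (\<integral>w. gaussian_disc_weight r w \<partial>lborel) *\<^sub>R STFT f z0"
    by (simp add: inner_w STFT_eq_tf_window)
qed

text \<open>Translating the disc to the origin, the weight \<open>exp (- \<pi> \<bar>w\<bar>\<^sup>2 / 2)\<close> of the Bargmann
  factorisation is radial, so the radial mean value property applies.\<close>
lemma norm_STFT_le_ball_integral:
  assumes "f \<in> M1" and r: "r > 0"
  shows "(1 - exp (- pi * r^2)) * norm (STFT f z0) \<le> (\<integral>w. indicator (ball z0 r) w * norm (STFT f w) \<partial>lborel)"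
proof -
  have [measurable]: "f \<in> borel_measurable lborel" and f2: "integrable lborel (\<lambda>t. (norm (f t))^2)"
    using assms(1) by (auto simp: M1_def)
  have [measurable]: "STFT f \<in> borel_measurable borel"
    using STFT_measurable by (simp add: measurable_lborel1)
  have [measurable]: "ball z0 r \<in> sets borel" by simp
  let ?G = "\<lambda>w. local_bargmann_transform f z0 (conj_of_pair w)"
  have "(1 - exp (- pi * r^2)) * norm (STFT f z0) \<le> (\<integral>w. gaussian_disc_weight r w \<partial>lborel) * norm (STFT f z0)"
    using integral_gaussian_disc_weight_ge[OF r] by (intro mult_right_mono) auto
  also have "\<dots> = norm (\<integral>w. gaussian_disc_weight r w *\<^sub>R ?G w \<partial>lborel)"
    using integral_nonneg_AE[of "gaussian_disc_weight r" lborel] gaussian_disc_weight_nonneg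
    by (simp add: local_bargmann_transform_disc_mean(2)[OF _ f2])
  also have "\<dots> \<le> (\<integral>w. norm (gaussian_disc_weight r w *\<^sub>R ?G w) \<partial>lborel)"
    by (rule integral_norm_bound)
  also have "\<dots> = (\<integral>w. indicator (ball z0 r) (z0 + w) * norm (STFT f (z0 + w)) \<partial>lborel)"
    by (intro Bochner_Integration.integral_cong)
      (auto simp: norm_STFT_translate gaussian_disc_weight_def gaussian_disc_weight_nonneg indicator_def dist_norm)
  also have "\<dots> = (\<integral>w. indicator (ball z0 r) w * norm (STFT f w) \<partial>lborel)"
    by (rule integral_lborel_translate) measurable
  finally show ?thesis .
qed

section \<open>Maximum Nyquist density\<close>

lemma set_integral_completion_main_part:
  fixes g :: "'a \<Rightarrow> real"
  assumes D: "D \<in> sets (completion M)" and [measurable]: "g \<in> borel_measurable M"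
  shows "(LINT z:D|completion M. g z) = (LINT z:main_part M D|M. g z)"
proof -
  have [measurable]: "main_part M D \<in> sets M" using D by simp
  have ae: "AE z in completion M. indicator D z * g z = indicator (main_part M D) z * g z"
  proof (rule AE_completion)
    show "AE z in M. indicator D z * g z = indicator (main_part M D) z * g z"
      using AE_notin_null_part[OF D]
      by (rule eventually_mono) (metis Un_iff indicator_simps main_part_null_part_Un[OF D])
  qed
  have "(LINT z:D|completion M. g z) = (\<integral>z. indicator (main_part M D) z * g z \<partial>completion M)"
    unfolding set_lebesgue_integral_def
  proof (rule integral_cong_AE)
    have [measurable]: "D \<in> sets (completion M)" "main_part M D \<in> sets (completion M)"
      "g \<in> borel_measurable (completion M)"
      using D by (auto intro: measurable_completion)
    show "(\<lambda>z. indicator D z *\<^sub>R g z) \<in> borel_measurable (completion M)"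
      "(\<lambda>z. indicator (main_part M D) z * g z) \<in> borel_measurable (completion M)"
      by measurable
  qed (use ae in simp)
  also have "\<dots> = (LINT z:main_part M D|M. g z)"
    unfolding set_lebesgue_integral_def by (simp add: integral_completion)
  finally show ?thesis .
qed

lemma nn_integral_ball_integral_swap:
  fixes V :: "'a::euclidean_space \<Rightarrow> ennreal"
  assumes [measurable]: "D \<in> sets borel" "V \<in> borel_measurable borel"
  shows "(\<integral>\<^sup>+z. indicator D z * (\<integral>\<^sup>+w. indicator (ball z r) w * V w \<partial>lborel) \<partial>lborel)
       = (\<integral>\<^sup>+w. V w * emeasure lborel (D \<inter> ball w r) \<partial>lborel)"
proof -
  have "open {p::'a \<times> 'a. dist (fst p) (snd p) < r}"
    by (intro open_Collect_less continuous_intros)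
  then have [measurable]: "{p::'a \<times> 'a. dist (fst p) (snd p) < r} \<in> sets (lborel \<Otimes>\<^sub>M lborel)"
    unfolding lborel_prod by simp
  define F where "F p = indicator D (fst p) * indicator {p::'a \<times> 'a. dist (fst p) (snd p) < r} p * V (snd p)" for p
  have [measurable]: "F \<in> borel_measurable (lborel \<Otimes>\<^sub>M lborel)" unfolding F_def by measurable
  have "(\<integral>\<^sup>+z. indicator D z * (\<integral>\<^sup>+w. indicator (ball z r) w * V w \<partial>lborel) \<partial>lborel)
      = (\<integral>\<^sup>+z. \<integral>\<^sup>+w. F (z, w) \<partial>lborel \<partial>lborel)"
    by (subst nn_integral_cmult[symmetric]) (auto intro!: nn_integral_cong simp: F_def indicator_def mult.assoc)
  also have "\<dots> = (\<integral>\<^sup>+w. \<integral>\<^sup>+z. F (z, w) \<partial>lborel \<partial>lborel)"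
    by (rule lborel_pair.Fubini') measurable
  also have "\<dots> = (\<integral>\<^sup>+w. V w * emeasure lborel (D \<inter> ball w r) \<partial>lborel)"
  proof (rule nn_integral_cong)
    fix w :: 'a
    have "(\<integral>\<^sup>+z. F (z, w) \<partial>lborel) = (\<integral>\<^sup>+z. V w * indicator (D \<inter> ball w r) z \<partial>lborel)"
      by (rule nn_integral_cong) (auto simp: F_def indicator_def dist_commute)
    then show "(\<integral>\<^sup>+z. F (z, w) \<partial>lborel) = V w * emeasure lborel (D \<inter> ball w r)"
      by (simp add: nn_integral_cmult_indicator)
  qed
  finally show ?thesis .
qed

lemma measure_le_nyquist_rho:
  assumes "D \<in> sets lebesgue" and "R > 0"
  shows "measure lebesgue (D \<inter> ball z (1/R)) \<le> nyquist_rho D R"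
proof -
  have "measure lebesgue (D \<inter> ball x (1/R)) \<le> measure lebesgue (ball x (1/R))" for x :: "real \<times> real"
    using assms by (intro measure_mono_fmeasurable) (auto intro!: bounded_set_imp_lmeasurable)
  also have "measure lebesgue (ball x (1/R)) = pi * (1/R)^2" for x :: "real \<times> real"
    using emeasure_ball_real2[of "1/R" x] assms by (simp add: measure_def)
  finally have "bdd_above (range (\<lambda>z. measure lebesgue (D \<inter> ball z (1/R))))"
    by (intro bdd_aboveI2) auto
  then show ?thesis unfolding nyquist_rho_def by (intro cSUP_upper) auto
qed

lemma nyquist_rho_nonneg: "D \<in> sets lebesgue \<Longrightarrow> R > 0 \<Longrightarrow> 0 \<le> nyquist_rho D R"
  using measure_le_nyquist_rho[of D R 0] by (meson measure_nonneg order_trans)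

lemma nyquist_rho_le_measure:
  assumes "D \<in> fmeasurable lebesgue"
  shows "nyquist_rho D R \<le> measure lebesgue D"
  unfolding nyquist_rho_def
  using assms by (intro cSUP_least) (auto intro!: measure_mono_fmeasurable)

lemma emeasure_main_part_ball_le_nyquist_rho:
  assumes D: "D \<in> sets lebesgue" and R: "R > 0"
  shows "emeasure lborel (main_part lborel D \<inter> ball w (1/R)) \<le> ennreal (nyquist_rho D R)"
proof -
  have D': "main_part lborel D \<inter> ball w (1/R) \<in> sets lborel" using main_part_sets[OF D] by auto
  have fin: "D \<inter> ball w (1/R) \<in> fmeasurable lebesgue"
    using D by (intro bounded_set_imp_lmeasurable) auto
  have "main_part lborel D \<subseteq> D" using main_part_null_part_Un[OF D] by (metis Un_upper1)
  then have "main_part lborel D \<inter> ball w (1/R) \<subseteq> D \<inter> ball w (1/R)" by auto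
  then have "emeasure lebesgue (main_part lborel D \<inter> ball w (1/R)) \<le> emeasure lebesgue (D \<inter> ball w (1/R))"
    using fin by (intro emeasure_mono) (auto dest: fmeasurableD)
  then have "emeasure lborel (main_part lborel D \<inter> ball w (1/R)) \<le> emeasure lebesgue (D \<inter> ball w (1/R))"
    using D' by (simp add: emeasure_completion)
  also have "\<dots> = ennreal (measure lebesgue (D \<inter> ball w (1/R)))"
    using fin by (simp add: emeasure_eq_measure2)
  also have "\<dots> \<le> ennreal (nyquist_rho D R)"
    using measure_le_nyquist_rho[OF D R] by (rule ennreal_leI)
  finally show ?thesis .
qed

lemma M1_integrable_norm_STFT:
  assumes "f \<in> M1"
  shows "integrable lborel (\<lambda>z. norm (STFT f z))"
proof -
  have [measurable]: "f \<in> borel_measurable lborel" using assms by (simp add: M1_def)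
  show ?thesis using assms by (simp add: M1_def integrable_completion)
qed

lemma nn_integral_ball_norm_STFT_ge:
  assumes f: "f \<in> M1" and r: "r > 0"
  shows "ennreal ((1 - exp (- pi * r^2)) * norm (STFT f z))
    \<le> (\<integral>\<^sup>+w. indicator (ball z r) w * ennreal (norm (STFT f w)) \<partial>lborel)"
proof -
  have "integrable lborel (\<lambda>w. indicator (ball z r) w * norm (STFT f w))"
    using integrable_mult_indicator[OF _ M1_integrable_norm_STFT[OF f], of "ball z r"] by simp
  then show ?thesis
    using norm_STFT_le_ball_integral[OF f r, of z]
    by (simp add: nn_integral_eq_integral ennreal_indicator[symmetric] ennreal_mult'[symmetric]
        del: ennreal_indicator)
qed

text \<open>Integrate the local estimate over \<open>D\<close> and swap the integrals: each point \<open>w\<close> is counted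
  with weight \<open>\<bar>D \<inter> B(w, 1/R)\<bar> \<le> \<rho>(D, R)\<close>.\<close>
lemma STFT_mass_main_part_le:
  assumes f: "f \<in> M1" and L1: "L1norm_STFT f = 1" and D: "D \<in> sets lebesgue" and R: "R > 0"
  shows "(1 - exp (- pi / R^2)) * (LINT z:main_part lborel D|lborel. norm (STFT f z)) \<le> nyquist_rho D R"
proof -
  define c where "c = 1 - exp (- pi / R^2)"
  define D' where "D' = main_part lborel D"
  have "c > 0" using R by (simp add: c_def)
  have [measurable]: "f \<in> borel_measurable lborel" "D' \<in> sets lborel"
    using f main_part_sets[OF D] by (auto simp: M1_def D'_def)
  then have [measurable]: "STFT f \<in> borel_measurable borel" "D' \<in> sets borel"
    using STFT_measurable by (simp_all add: measurable_lborel1)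
  have V_int: "integrable lborel (\<lambda>z. norm (STFT f z))"
    using f by (rule M1_integrable_norm_STFT)
  have "(\<integral>z. norm (STFT f z) \<partial>lborel) = 1"
    using L1 by (simp add: L1norm_STFT_def integral_completion)
  then have V_mass: "(\<integral>\<^sup>+w. ennreal (norm (STFT f w)) \<partial>lborel) = 1"
    using V_int by (simp add: nn_integral_eq_integral)
  have "integrable lborel (\<lambda>z. c * (indicator D' z * norm (STFT f z)))"
    using integrable_mult_indicator[OF \<open>D' \<in> sets lborel\<close> V_int] by simp
  then have "ennreal (c * (LINT z:D'|lborel. norm (STFT f z)))
      = (\<integral>\<^sup>+z. ennreal (c * (indicator D' z * norm (STFT f z))) \<partial>lborel)"
    using \<open>c > 0\<close> by (subst nn_integral_eq_integral) (auto simp: set_lebesgue_integral_def)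
  also have "\<dots> = (\<integral>\<^sup>+z. indicator D' z * ennreal (c * norm (STFT f z)) \<partial>lborel)"
    by (intro nn_integral_cong) (simp add: indicator_def)
  also have "\<dots> \<le> (\<integral>\<^sup>+z. indicator D' z * (\<integral>\<^sup>+w. indicator (ball z (1/R)) w * ennreal (norm (STFT f w)) \<partial>lborel) \<partial>lborel)"
    using nn_integral_ball_norm_STFT_ge[OF f, of "1/R"] R
    by (intro nn_integral_mono mult_left_mono) (simp_all add: c_def power_divide)
  also have "\<dots> = (\<integral>\<^sup>+w. ennreal (norm (STFT f w)) * emeasure lborel (D' \<inter> ball w (1/R)) \<partial>lborel)"
    by (rule nn_integral_ball_integral_swap) measurable
  also have "\<dots> \<le> (\<integral>\<^sup>+w. ennreal (norm (STFT f w)) * ennreal (nyquist_rho D R) \<partial>lborel)"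
    unfolding D'_def
    by (intro nn_integral_mono mult_left_mono emeasure_main_part_ball_le_nyquist_rho[OF D R]) simp
  also have "\<dots> = ennreal (nyquist_rho D R)"
    by (simp add: nn_integral_multc V_mass)
  finally show ?thesis
    using nyquist_rho_nonneg[OF D R] by (simp add: c_def D'_def ennreal_le_iff)
qed

lemma STFT_mass_le_nyquist_rho:
  assumes f: "f \<in> M1" and "L1norm_STFT f = 1" and D: "D \<in> sets lebesgue" and R: "R > 0"
  shows "(LINT z:D|lebesgue. norm (STFT f z)) \<le> nyquist_rho D R / (1 - exp (- pi / R^2))"
proof -
  have [measurable]: "STFT f \<in> borel_measurable lborel"
    using f by (intro STFT_measurable) (simp add: M1_def)
  have "(LINT z:D|lebesgue. norm (STFT f z)) = (LINT z:main_part lborel D|lborel. norm (STFT f z))"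
    using D by (rule set_integral_completion_main_part) measurable
  moreover have "0 < 1 - exp (- pi / R^2)" using R by simp
  ultimately show ?thesis
    using STFT_mass_main_part_le[OF assms] by (simp add: pos_le_divide_eq mult.commute)
qed

lemma INF_divide_one_minus_exp_le:
  fixes m :: real
  assumes m: "0 \<le> m"
  shows "(INF R\<in>{0<..}. ereal (m / (1 - exp (- pi / R^2)))) \<le> ereal m"
proof (rule ereal_le_epsilon2)
  fix e :: real assume e: "0 < e"
  define T where "T = max 1 (ln ((m + e) / e))"
  define R where "R = sqrt (pi / T)"
  have T: "T \<ge> 1" by (simp add: T_def)
  then have R: "R > 0" and RT: "pi / R^2 = T" by (simp_all add: R_def)
  have "exp (- T) \<le> exp (- ln ((m + e) / e))" by (simp add: T_def)
  also have "\<dots> = e / (m + e)" using e m by (simp add: exp_minus)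
  finally have "(m + e) * exp (- T) \<le> e" using e m by (simp add: field_simps)
  then have "m \<le> (m + e) * (1 - exp (- T))" by (simp add: algebra_simps)
  moreover have "exp (- T) < 1" using T by simp
  ultimately have "m / (1 - exp (- pi / R^2)) \<le> m + e" by (simp add: RT pos_divide_le_eq)
  then have "ereal (m / (1 - exp (- pi / R^2))) \<le> ereal m + ereal e" by simp
  moreover have "(INF R\<in>{0<..}. ereal (m / (1 - exp (- pi / R^2)))) \<le> ereal (m / (1 - exp (- pi / R^2)))"
    using R by (intro INF_lower) simp
  ultimately show "(INF R\<in>{0<..}. ereal (m / (1 - exp (- pi / R^2)))) \<le> ereal m + ereal e"
    by (rule order_trans[rotated])
qed

lemma INF_nyquist_ratio_le_measure:
  assumes "D \<in> sets lebesgue"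
  shows "(INF R\<in>{0<..}. ereal (nyquist_rho D R / (1 - exp (- pi / R^2)))) \<le> enn2ereal (emeasure lebesgue D)"
proof (cases "emeasure lebesgue D = \<infinity>")
  case False
  then have D: "D \<in> fmeasurable lebesgue"
    using assms by (simp add: fmeasurable_def less_top)
  have "(INF R\<in>{0<..}. ereal (nyquist_rho D R / (1 - exp (- pi / R^2))))
      \<le> (INF R\<in>{0<..}. ereal (measure lebesgue D / (1 - exp (- pi / R^2))))"
  proof (rule INF_mono)
    fix R :: real assume "R \<in> {0<..}"
    moreover have "exp (- pi / R^2) \<le> 1" by simp
    ultimately show "\<exists>R'\<in>{0<..}. ereal (nyquist_rho D R' / (1 - exp (- pi / R'^2)))
        \<le> ereal (measure lebesgue D / (1 - exp (- pi / R^2)))"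
      using nyquist_rho_le_measure[OF D] by (intro bexI[of _ R]) (auto intro!: divide_right_mono)
  qed
  also have "\<dots> \<le> ereal (measure lebesgue D)"
    by (rule INF_divide_one_minus_exp_le) simp
  finally show ?thesis
    using D by (simp add: emeasure_eq_measure2)
qed simp

theorem corollary3:
  fixes f :: "real \<Rightarrow> complex" and D :: "(real \<times> real) set" and \<epsilon> :: real
  assumes "f \<in> M1" and "L1norm_STFT f = 1"
    and "D \<in> sets lebesgue" and "\<epsilon> \<ge> 0"
    and "1 - \<epsilon> \<le> (LINT z:D|lebesgue. norm (STFT f z))"
  shows "ereal (1 - \<epsilon>) \<le> (INF R\<in>{0<..}. ereal (nyquist_rho D R / (1 - exp (- pi / R^2))))
     \<and> (INF R\<in>{0<..}. ereal (nyquist_rho D R / (1 - exp (- pi / R^2))))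
         \<le> enn2ereal (emeasure lebesgue D)"
proof
  show "ereal (1 - \<epsilon>) \<le> (INF R\<in>{0<..}. ereal (nyquist_rho D R / (1 - exp (- pi / R^2))))"
    using assms(5) STFT_mass_le_nyquist_rho[OF assms(1-3)] by (intro INF_greatest) force
  show "(INF R\<in>{0<..}. ereal (nyquist_rho D R / (1 - exp (- pi / R^2)))) \<le> enn2ereal (emeasure lebesgue D)"
    using assms(3) by (rule INF_nyquist_ratio_le_measure)
qed

end
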